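(* Let $n>s\ge1$ be integers and $g(x)=\sum_{i=0}^sa_ix^i\in\mathbb{R}[x]$ of degree $s$ with nonzero discriminant, and let $f(t,x)=x^n+t\,g(x)$. Suppose $g$ has no real roots, $n-s$ is even, and $a_s>0$. Then for every real $\beta>\max\{\alpha\in\mathbb{R}\mid \Delta_{f,x}(\alpha)=0\}$, the polynomial $f(\beta,x)$ has no real roots (it is totally complex).
   Context: $\Delta_{f,x}(t)$ denotes the discriminant of $f(t,x)$ with respect to $x$, a polynomial in $t$ (it vanishes at $t=0$). A real polynomial is totally complex if it has no real roots. *)

theory Defs
  imports "HOL-Computational_Algebra.Polynomial" "Subresultants.Resultant_Prelim"
begin

text \<open>Discriminant of a univariate polynomial p of degree d over an integral domain:
  (-1)^(d(d-1)/2) * Res(p, p') / lc(p). (The division is exact.)\<close>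
definition discriminant :: "'a :: {idom_divide} poly \<Rightarrow> 'a" where
  "discriminant p = ((-1) ^ (degree p * (degree p - 1) div 2) * resultant p (pderiv p))
                      div lead_coeff p"

text \<open>The bivariate polynomial f(t,x) = x^n + t g(x), viewed as a polynomial in x
  whose coefficients are polynomials in t.\<close>
definition fpoly :: "nat \<Rightarrow> real poly \<Rightarrow> real poly poly" where
  "fpoly n g = monom 1 n + map_poly (\<lambda>c. [:0, c:]) g"

definition disc_fx :: "nat \<Rightarrow> real poly \<Rightarrow> real poly" where
  "disc_fx n g = discriminant (fpoly n g)"

end

theory Submission
  imports Defs "Subresultants.Subresultant_Gcd" "HOL-Computational_Algebra.Field_as_Ring"
begin

text \<open>At \<open>t = 0\<close> the polynomial \<open>f(t,x) = x^n + t g(x)\<close> specialises to \<open>x^n\<close>, which has a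
  multiple root at \<open>0\<close>; since \<open>f\<close> is monic in \<open>x\<close>, the discriminant commutes with this
  specialisation, so \<open>\<Delta>\<^sub>f\<^sub>,\<^sub>x(0) = 0\<close> and hence every admissible \<open>\<beta>\<close> is positive.
  A real polynomial without real roots and with positive leading coefficient is positive and
  of even degree, so \<open>n\<close> is even and \<open>x^n + \<beta> g(x) > 0\<close> for all real \<open>x\<close>.\<close>

lemma resultant_eq_0_if_common_root:
  fixes p q :: "'a :: {field_gcd, semiring_gcd_mult_normalize} poly"
  assumes "p \<noteq> 0" "poly p a = 0" "poly q a = 0"
  shows "resultant p q = 0"
proof -
  have "[:-a, 1:] dvd gcd p q"
    using assms(2,3) by (simp add: poly_eq_0_iff_dvd)
  moreover have "gcd p q \<noteq> 0"
    using assms(1) by simp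
  ultimately have "degree [:-a, 1:] \<le> degree (gcd p q)"
    by (rule dvd_imp_degree_le)
  then show ?thesis
    by (simp add: resultant_0_gcd)
qed

lemma discriminant_eq_0_if_multiple_root:
  fixes p :: "'a :: {field_gcd, semiring_gcd_mult_normalize} poly"
  assumes "p \<noteq> 0" "poly p a = 0" "poly (pderiv p) a = 0"
  shows "discriminant p = 0"
  using resultant_eq_0_if_common_root[OF assms] by (simp add: discriminant_def)

lemma poly_discriminant_monic:
  fixes P :: "'a :: {idom_divide, ring_char_0} poly poly"
  assumes "lead_coeff P = 1"
    and "degree (map_poly (\<lambda>c. poly c a) P) = degree P"
  shows "poly (discriminant P) a = discriminant (map_poly (\<lambda>c. poly c a) P)"
proof -
  let ?Pa = "map_poly (\<lambda>c. poly c a) P"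
  have "lead_coeff ?Pa = 1"
    using assms by (simp add: coeff_map_poly)
  moreover have "degree (map_poly (\<lambda>c. poly c a) (pderiv P)) = degree (pderiv P)"
    using assms(2) by (simp add: poly_hom.map_poly_pderiv degree_pderiv)
  ultimately show ?thesis
    using assms by (simp add: discriminant_def poly_hom.map_poly_pderiv
        poly_hom.resultant_map_poly[symmetric])
qed

lemma coeff_fpoly: "coeff (fpoly n g) i = (if i = n then 1 else 0) + [:0, coeff g i:]"
  unfolding fpoly_def by (simp add: coeff_map_poly)

lemma degree_fpoly:
  assumes "degree g < n"
  shows "degree (fpoly n g) = n"
proof (rule antisym)
  show "degree (fpoly n g) \<le> n"
    using assms by (intro degree_le) (simp add: coeff_fpoly coeff_eq_0)
  show "n \<le> degree (fpoly n g)"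
    using assms by (intro le_degree) (simp add: coeff_fpoly coeff_eq_0)
qed

lemma lead_coeff_fpoly: "degree g < n \<Longrightarrow> lead_coeff (fpoly n g) = 1"
  by (simp add: degree_fpoly coeff_fpoly coeff_eq_0)

lemma fpoly_at_0: "map_poly (\<lambda>c. poly c 0) (fpoly n g) = monom 1 n"
  by (rule poly_eqI) (simp add: coeff_map_poly coeff_fpoly)

lemma poly_disc_fx_0:
  assumes "degree g < n" "n \<ge> 2"
  shows "poly (disc_fx n g) 0 = 0"
proof -
  have "poly (disc_fx n g) 0 = discriminant (map_poly (\<lambda>c. poly c 0) (fpoly n g))"
    unfolding disc_fx_def using assms(1)
    by (intro poly_discriminant_monic) (simp_all add: degree_fpoly coeff_fpoly coeff_eq_0 fpoly_at_0 degree_monom_eq)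
  also have "\<dots> = discriminant (monom (1::real) n)"
    by (simp only: fpoly_at_0)
  also have "\<dots> = 0"
    using assms(2) by (intro discriminant_eq_0_if_multiple_root) (auto simp: poly_monom pderiv_monom)
  finally show ?thesis .
qed

lemma poly_pos_if_no_real_roots:
  fixes p :: "real poly"
  assumes "\<forall>x. poly p x \<noteq> 0" "lead_coeff p > 0"
  shows "poly p x > 0"
proof (rule ccontr)
  assume "\<not> poly p x > 0"
  with assms(1) have "poly p x < 0"
    by (meson linorder_neqE_linordered_idom)
  obtain N where N: "\<forall>y\<ge>N. lead_coeff p \<le> poly p y"
    using poly_pinfty_gt_lc[OF assms(2)] by blast
  define b where "b = max N (x + 1)"
  have "x < b" "poly p b > 0"
    using N assms(2) by (auto simp: b_def intro: less_le_trans)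
  with \<open>poly p x < 0\<close> assms(1) show False
    using poly_IVT_pos by blast
qed

lemma even_degree_if_no_real_roots:
  fixes p :: "real poly"
  assumes "\<forall>x. poly p x \<noteq> 0"
  shows "even (degree p)"
proof -
  have "p \<noteq> 0"
    using assms by auto
  define q where "q = (if lead_coeff p > 0 then p else - p)"
  have q: "degree q = degree p" "lead_coeff q > 0" "\<forall>x. poly q x \<noteq> 0"
    using assms \<open>p \<noteq> 0\<close> by (auto simp: q_def linorder_not_less le_less)
  show ?thesis
  proof (rule ccontr)
    assume "odd (degree p)"
    \<comment> \<open>\<open>-q(-x)\<close> has the same leading coefficient as \<open>q\<close>, so both tend to \<open>+\<infinity>\<close>.\<close>
    let ?r = "- (q \<circ>\<^sub>p [:0, -1:])"
    have "lead_coeff (q \<circ>\<^sub>p [:0, -1:]) = lead_coeff q * (-1) ^ degree q"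
      by (subst lead_coeff_comp) auto
    then have "lead_coeff ?r = lead_coeff q"
      using \<open>odd (degree p)\<close> q(1) by simp
    then obtain N where "\<forall>y\<ge>N. lead_coeff q \<le> poly ?r y"
      using poly_pinfty_gt_lc[of ?r] q(2) by auto
    then have "poly q (- N) < 0"
      using q(2) by (auto simp: poly_pcompose)
    with poly_pos_if_no_real_roots[OF q(3,2)] show False
      by (metis less_asym)
  qed
qed

theorem mainTheorem8:
  fixes n s :: nat and g :: "real poly"
  assumes "n > s" and "s \<ge> 1"
    and "degree g = s"
    and "discriminant g \<noteq> 0"
    and "\<forall>x::real. poly g x \<noteq> 0"
    and "even (n - s)"
    and "coeff g s > 0"
  shows "\<forall>\<beta>::real. (\<forall>\<alpha>::real. poly (disc_fx n g) \<alpha> = 0 \<longrightarrow> \<alpha> < \<beta>) \<longrightarrow>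
           (\<forall>x::real. poly (monom 1 n + smult \<beta> g) x \<noteq> 0)"
proof (intro allI impI)
  fix \<beta> x :: real
  assume "\<forall>\<alpha>. poly (disc_fx n g) \<alpha> = 0 \<longrightarrow> \<alpha> < \<beta>"
  moreover have "poly (disc_fx n g) 0 = 0"
    using assms(1-3) by (intro poly_disc_fx_0) auto
  ultimately have "\<beta> > 0"
    by blast
  moreover have "poly g x > 0"
    using assms(3,5,7) by (intro poly_pos_if_no_real_roots) auto
  moreover have "even n"
    using even_degree_if_no_real_roots[OF assms(5)] assms(1,3,6)
    by (metis add_diff_inverse_nat even_add less_asym)
  ultimately have "poly (monom 1 n + smult \<beta> g) x > 0"
    by (simp add: poly_monom add_nonneg_pos zero_le_even_power)
  then show "poly (monom 1 n + smult \<beta> g) x \<noteq> 0"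
    by simp
qed

end
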